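(* Let $\lambda$ be a strict partition (distinct parts) with largest part $L$, $n\ge1$, $\sigma\in\operatorname{Tab}(\lambda,n)$, and $M=(M^{(L)},\dots,M^{(1)})$ the multiline diagram with $M^{(r)}$ having the particle of label $\lambda_j$ at position $\sigma(r,j)$ for each cell $(r,j)$. Then $$\prod_{u\in\operatorname{dg}(\lambda)}x_{\sigma(u)}\cdot t^{\sum_{r=2}^L R(M^{(r)},M^{(r-1)})}=t^{\operatorname{quinv}(\sigma)}\prod_{u\in\operatorname{dg}(\lambda)}x_{\sigma(u)},$$ i.e. $\sum_{r=2}^L R(M^{(r)},M^{(r-1)})=\operatorname{quinv}(\sigma)$.
   Context: Fillings: $\operatorname{dg}(\lambda)=\{(r,i):1\le i\le\ell(\lambda),1\le r\le\lambda_i\}$ (row $r$ from the bottom, column $i$ from the left); $\operatorname{Tab}(\lambda,n)$ = maps $\sigma:\operatorname{dg}(\lambda)\to[n]$. $\mathcal Q$ = set of integer triples $(a,b,c)$ with $a<b<c$, or $b<c<a$, or $c<b<a$, or $a=b\ne c$. With $\sigma(\lambda_i+1,i):=0$, $\operatorname{quinv}(\sigma)$ = number of pairs of cells $(r,i),(r,j)$, $i<j$, with $(\sigma(r+1,i),\sigma(r,i),\sigma(r,j))\in\mathcal Q$. Multiline diagram: for each row $r\in[L]$, $M^{(r)}$ places the particles with labels $\{\lambda_i:\lambda_i\ge r\}$ at positions in $[n]$; $p_s(M^{(r)})$ denotes the position of the particle of label $s$ in row $r$. Cyclic betweenness: for $a,b,c\in[n]$, "$a<b<c$" (cyclically) means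 $b$ lies strictly between $a$ and $c$ when reading $1,\dots,n$ clockwise around a circle from $a$ to $c$, including the case $a=c\ne b$. The number of refusals is $R(M^{(r)},M^{(r-1)})=\#\{(s,q): s$ a label in row $r$, $q$ a label in row $r-1$, $q<s$, and cyclically $p_s(M^{(r-1)})<p_q(M^{(r-1)})<p_s(M^{(r)})\}$. *)

theory Defs
  imports Main
begin

text \<open>A partition is a list of parts lam = [lam_1, ..., lam_l]; column i (1-based)
  has lam ! (i - 1) cells.  Cells are pairs (r, i): row r from the bottom, column i.\<close>

definition dg :: "nat list \<Rightarrow> (nat \<times> nat) set" where
  "dg lam = {(r, i). 1 \<le> i \<and> i \<le> length lam \<and> 1 \<le> r \<and> r \<le> lam ! (i - 1)}"

definition Tab :: "nat list \<Rightarrow> nat \<Rightarrow> (nat \<times> nat \<Rightarrow> nat) set" where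
  "Tab lam n = {\<sigma>. \<forall>u \<in> dg lam. \<sigma> u \<in> {1..n}}"

definition inQ :: "nat \<Rightarrow> nat \<Rightarrow> nat \<Rightarrow> bool" where
  "inQ a b c \<longleftrightarrow> (a < b \<and> b < c) \<or> (b < c \<and> c < a) \<or> (c < a \<and> a < b) \<or> (a = b \<and> b \<noteq> c)"

definition sigma_ext :: "nat list \<Rightarrow> (nat \<times> nat \<Rightarrow> nat) \<Rightarrow> nat \<times> nat \<Rightarrow> nat" where
  "sigma_ext lam \<sigma> u = (if u \<in> dg lam then \<sigma> u else 0)"

definition quinv :: "nat list \<Rightarrow> (nat \<times> nat \<Rightarrow> nat) \<Rightarrow> nat" where
  "quinv lam \<sigma> = card {((r, i), (r', j)). (r, i) \<in> dg lam \<and> (r', j) \<in> dg lam \<and> r' = r \<and> i < j \<and>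
      inQ (sigma_ext lam \<sigma> (r + 1, i)) (\<sigma> (r, i)) (\<sigma> (r, j))}"

text \<open>Cyclic betweenness on positions 1..n: b lies strictly between a and c reading
  clockwise from a to c (including a = c ~= b).\<close>
definition cyc_between :: "nat \<Rightarrow> nat \<Rightarrow> nat \<Rightarrow> nat \<Rightarrow> bool" where
  "cyc_between n a b c \<longleftrightarrow>
     (if a = c then b \<noteq> a
      else b \<noteq> a \<and> b \<noteq> c \<and> (b + n - a) mod n < (c + n - a) mod n)"

text \<open>A row of a multiline diagram: partial map from particle labels to positions.\<close>
type_synonym mlrow = "nat \<Rightarrow> nat option"

definition refusals :: "nat \<Rightarrow> mlrow \<Rightarrow> mlrow \<Rightarrow> nat" where
  "refusals n M M' = card {(s, q). s \<in> dom M \<and> q \<in> dom M' \<and> q < s \<and>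
      cyc_between n (the (M' s)) (the (M' q)) (the (M s))}"

definition col_of :: "nat list \<Rightarrow> nat \<Rightarrow> nat" where
  "col_of lam s = (THE j. 1 \<le> j \<and> j \<le> length lam \<and> lam ! (j - 1) = s)"

definition mld :: "nat list \<Rightarrow> (nat \<times> nat \<Rightarrow> nat) \<Rightarrow> nat \<Rightarrow> mlrow" where
  "mld lam \<sigma> r = (\<lambda>s. if s \<in> set lam \<and> 1 \<le> r \<and> r \<le> s then Some (\<sigma> (r, col_of lam s)) else None)"

end

theory Submission
  imports Defs
begin

text \<open>Identify a label \<open>\<lambda>\<^sub>i\<close> with its column \<open>i\<close>; since \<open>\<lambda>\<close> is strictly decreasing,
  a pair of labels \<open>s > q\<close> is a pair of columns \<open>i < j\<close>. A refusal of \<open>q\<close> by \<open>s\<close> between rows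
  \<open>r\<close> and \<open>r - 1\<close> says that \<open>\<sigma>(r-1,j)\<close> lies cyclically strictly between \<open>\<sigma>(r-1,i)\<close> and
  \<open>\<sigma>(r,i)\<close>, which for values in \<open>[n]\<close> is exactly \<open>(\<sigma>(r,i), \<sigma>(r-1,i), \<sigma>(r-1,j)) \<in> Q\<close>, i.e.
  a queue inversion in row \<open>r - 1\<close>. Hence refusals over all rows and queue inversions are in
  bijection.\<close>

definition quinv_pairs :: "nat list \<Rightarrow> (nat \<times> nat \<Rightarrow> nat) \<Rightarrow> ((nat \<times> nat) \<times> (nat \<times> nat)) set" where
  "quinv_pairs lam \<sigma> = {((r, i), (r', j)). (r, i) \<in> dg lam \<and> (r', j) \<in> dg lam \<and> r' = r \<and> i < j \<and>
      inQ (sigma_ext lam \<sigma> (r + 1, i)) (\<sigma> (r, i)) (\<sigma> (r, j))}"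

definition refusal_pairs :: "nat \<Rightarrow> mlrow \<Rightarrow> mlrow \<Rightarrow> (nat \<times> nat) set" where
  "refusal_pairs n M M' = {(s, q). s \<in> dom M \<and> q \<in> dom M' \<and> q < s \<and>
      cyc_between n (the (M' s)) (the (M' q)) (the (M s))}"

lemma quinv_eq_card: "quinv lam \<sigma> = card (quinv_pairs lam \<sigma>)"
  unfolding quinv_def quinv_pairs_def ..

lemma refusals_eq_card: "refusals n M M' = card (refusal_pairs n M M')"
  unfolding refusals_def refusal_pairs_def ..

lemma finite_refusal_pairs:
  assumes "finite (dom M)" "finite (dom M')"
  shows "finite (refusal_pairs n M M')"
proof (rule finite_subset)
  show "refusal_pairs n M M' \<subseteq> dom M \<times> dom M'" unfolding refusal_pairs_def by auto
qed (use assms in simp)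

lemma dom_mld_subset: "dom (mld lam \<sigma> r) \<subseteq> set lam"
  unfolding mld_def by (auto split: if_splits)

lemma shifted_mod_eq:
  fixes y z n :: nat
  assumes "1 \<le> y" "y \<le> n" "1 \<le> z" "z \<le> n"
  shows "(z + n - y) mod n = (if y \<le> z then z - y else z + n - y)"
proof (cases "y \<le> z")
  case True
  then have "z + n - y = (z - y) + n" by arith
  moreover have "z - y < n" using assms by simp
  ultimately have "(z + n - y) mod n = z - y" by (metis mod_add_self2 mod_less)
  then show ?thesis using True by simp
qed (use assms in simp)

lemma cyc_between_iff_inQ:
  assumes "x \<in> {1..n}" "y \<in> {1..n}" "z \<in> {1..n}"
  shows "cyc_between n y z x \<longleftrightarrow> inQ x y z"
  using assms shifted_mod_eq[of y n z] shifted_mod_eq[of y n x]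
  unfolding cyc_between_def inQ_def by auto

lemma strict_decreasing_nth_less_iff:
  fixes xs :: "'a::linorder list"
  assumes strict: "sorted_wrt (>) xs" and "a < length xs" "b < length xs"
  shows "xs ! b < xs ! a \<longleftrightarrow> a < b"
proof
  assume lt: "xs ! b < xs ! a"
  show "a < b"
  proof (rule ccontr)
    assume "\<not> a < b"
    then consider "a = b" | "b < a" by linarith
    then show False
      using lt sorted_wrt_nth_less[OF strict, of b a] assms(2) by cases auto
  qed
qed (use sorted_wrt_nth_less[OF strict] assms(3) in blast)

lemma strict_decreasing_distinct:
  fixes xs :: "'a::linorder list"
  assumes "sorted_wrt (>) xs"
  shows "distinct xs"
proof -
  have "sorted_wrt (<) (rev xs)" using assms by (simp add: sorted_wrt_rev)
  then show ?thesis by (simp add: strict_sorted_iff)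
qed

lemma col_of_nth:
  assumes "distinct lam" "1 \<le> i" "i \<le> length lam"
  shows "col_of lam (lam ! (i - 1)) = i"
  unfolding col_of_def
proof (rule the_equality)
  fix j assume j: "1 \<le> j \<and> j \<le> length lam \<and> lam ! (j - 1) = lam ! (i - 1)"
  moreover have "j - 1 < length lam" "i - 1 < length lam" using assms j by auto
  ultimately have "j - 1 = i - 1" using nth_eq_iff_index_eq[OF assms(1)] by blast
  then show "j = i" using assms j by arith
qed (use assms in simp)

lemma col_of_mem:
  assumes "distinct lam" "s \<in> set lam"
  shows "1 \<le> col_of lam s" "col_of lam s \<le> length lam" "lam ! (col_of lam s - 1) = s"
proof -
  obtain k where k: "k < length lam" "lam ! k = s" using assms(2) by (auto simp: in_set_conv_nth)
  then have "col_of lam s = k + 1" using col_of_nth[OF assms(1), of "k + 1"] by simp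
  then show "1 \<le> col_of lam s" "col_of lam s \<le> length lam" "lam ! (col_of lam s - 1) = s"
    using k by simp_all
qed

text \<open>The column-top convention \<open>sigma_ext\<close> drops out: a cell with a cell to its right in the
  same row is never the top of its column.\<close>

lemma quinv_pairs_strict:
  assumes "sorted_wrt (>) lam"
  shows "quinv_pairs lam \<sigma> =
    {((r, i), (r', j)). r' = r \<and> 1 \<le> r \<and> 1 \<le> i \<and> i < j \<and> j \<le> length lam \<and>
      r \<le> lam ! (j - 1) \<and> inQ (\<sigma> (r + 1, i)) (\<sigma> (r, i)) (\<sigma> (r, j))}"
proof -
  have "lam ! (j - 1) < lam ! (i - 1)" if "1 \<le> i" "i < j" "j \<le> length lam" for i j
    using strict_decreasing_nth_less_iff[OF assms, of "i - 1" "j - 1"] that by simp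
  then show ?thesis
    unfolding quinv_pairs_def dg_def sigma_ext_def by (fastforce split: if_splits)
qed

lemma refusal_pairs_mld:
  assumes "distinct lam" "\<sigma> \<in> Tab lam n" "2 \<le> r"
  shows "refusal_pairs n (mld lam \<sigma> r) (mld lam \<sigma> (r - 1)) =
    {(s, q). s \<in> set lam \<and> q \<in> set lam \<and> r - 1 \<le> q \<and> q < s \<and>
      inQ (\<sigma> (r, col_of lam s)) (\<sigma> (r - 1, col_of lam s)) (\<sigma> (r - 1, col_of lam q))}"
proof -
  have cell: "(\<rho>, col_of lam s) \<in> dg lam" if "s \<in> set lam" "1 \<le> \<rho>" "\<rho> \<le> s" for \<rho> s
    using col_of_mem[OF assms(1) that(1)] that unfolding dg_def by simp
  have "\<sigma> (\<rho>, col_of lam s) \<in> {1..n}" if "s \<in> set lam" "1 \<le> \<rho>" "\<rho> \<le> s" for \<rho> s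
    using assms(2) cell[OF that] unfolding Tab_def by blast
  with assms(3) show ?thesis
    unfolding refusal_pairs_def mld_def using cyc_between_iff_inQ by (auto simp: dom_def)
qed

lemma bij_quinv_pairs_refusal_pairs:
  assumes strict: "sorted_wrt (>) lam" and L: "L = Max (set lam)" and tab: "\<sigma> \<in> Tab lam n"
  shows "bij_betw (\<lambda>((r, i), (_, j)). (r + 1, lam ! (i - 1), lam ! (j - 1)))
           (quinv_pairs lam \<sigma>) (SIGMA r:{2..L}. refusal_pairs n (mld lam \<sigma> r) (mld lam \<sigma> (r - 1)))"
    (is "bij_betw _ ?Q ?R")
proof -
  define f :: "(nat \<times> nat) \<times> (nat \<times> nat) \<Rightarrow> nat \<times> nat \<times> nat"
    where "f = (\<lambda>((r, i), (_, j)). (r + 1, lam ! (i - 1), lam ! (j - 1)))"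
  define g :: "nat \<times> nat \<times> nat \<Rightarrow> (nat \<times> nat) \<times> (nat \<times> nat)"
    where "g = (\<lambda>(r, s, q). ((r - 1, col_of lam s), (r - 1, col_of lam q)))"
  have dist: "distinct lam" using strict by (rule strict_decreasing_distinct)
  have label_less: "lam ! (j - 1) < lam ! (i - 1) \<longleftrightarrow> i < j"
    if "1 \<le> i" "i \<le> length lam" "1 \<le> j" "j \<le> length lam" for i j
    using strict_decreasing_nth_less_iff[OF strict, of "i - 1" "j - 1"] that by auto
  note Q = quinv_pairs_strict[OF strict] and R = refusal_pairs_mld[OF dist tab]
  have fwd: "g (f p) = p \<and> f p \<in> ?R" if "p \<in> ?Q" for p
  proof -
    from that obtain r i j where p: "p = ((r, i), (r, j))" and
      ij: "1 \<le> r" "1 \<le> i" "i < j" "j \<le> length lam" "r \<le> lam ! (j - 1)" and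
      inQ: "inQ (\<sigma> (r + 1, i)) (\<sigma> (r, i)) (\<sigma> (r, j))"
      unfolding Q by auto
    have "lam ! (j - 1) < lam ! (i - 1)" using label_less ij by simp
    moreover have "lam ! (i - 1) \<le> L" using L ij by simp
    ultimately show ?thesis
      unfolding p f_def g_def
      using R[of "r + 1"] ij inQ col_of_nth[OF dist, of i] col_of_nth[OF dist, of j] by simp
  qed
  have bwd: "f (g x) = x \<and> g x \<in> ?Q" if "x \<in> ?R" for x
  proof -
    from that obtain r s q where x: "x = (r, s, q)" and r: "2 \<le> r"
      and sq_R: "(s, q) \<in> refusal_pairs n (mld lam \<sigma> r) (mld lam \<sigma> (r - 1))"
      by auto
    from sq_R have sq: "s \<in> set lam" "q \<in> set lam" "r - 1 \<le> q" "q < s" and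
      inQ: "inQ (\<sigma> (r, col_of lam s)) (\<sigma> (r - 1, col_of lam s)) (\<sigma> (r - 1, col_of lam q))"
      unfolding R[OF r] by auto
    have "col_of lam s < col_of lam q"
      using sq col_of_mem[OF dist] label_less[of "col_of lam s" "col_of lam q"] by simp
    then show ?thesis
      unfolding x f_def g_def Q using r sq inQ col_of_mem[OF dist] by simp
  qed
  have "bij_betw f ?Q ?R"
  proof (rule bij_betw_byWitness[where f' = g])
    show "\<forall>p \<in> ?Q. g (f p) = p" "f ` ?Q \<subseteq> ?R" using fwd by blast+
    show "\<forall>x \<in> ?R. f (g x) = x" "g ` ?R \<subseteq> ?Q" using bwd by blast+
  qed
  then show ?thesis unfolding f_def .
qed

theorem lemma9:
  fixes lam :: "nat list" and n L :: nat and \<sigma> :: "nat \<times> nat \<Rightarrow> nat"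
  assumes strict: "sorted_wrt (>) lam"
    and pos: "0 \<notin> set lam"
    and ne: "lam \<noteq> []"
    and L: "L = Max (set lam)"
    and n: "n \<ge> 1"
    and tab: "\<sigma> \<in> Tab lam n"
  shows "(\<Sum>r = 2..L. refusals n (mld lam \<sigma> r) (mld lam \<sigma> (r - 1))) = quinv lam \<sigma>"
proof -
  have "finite (refusal_pairs n (mld lam \<sigma> r) (mld lam \<sigma> (r - 1)))" for r
    by (rule finite_refusal_pairs) (auto intro: finite_subset[OF dom_mld_subset])
  then have "(\<Sum>r = 2..L. refusals n (mld lam \<sigma> r) (mld lam \<sigma> (r - 1)))
      = card (SIGMA r:{2..L}. refusal_pairs n (mld lam \<sigma> r) (mld lam \<sigma> (r - 1)))"
    by (simp add: refusals_eq_card card_SigmaI)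
  also have "\<dots> = card (quinv_pairs lam \<sigma>)"
    using bij_quinv_pairs_refusal_pairs[OF strict L tab] by (rule bij_betw_same_card[symmetric])
  finally show ?thesis by (simp only: quinv_eq_card)
qed

end
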